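(* Suppose $d=2$ and let $\lambda\in\mathbb R$. Then $L,(L^*+\lambda)^2$ is a Leonard pair on $\mathcal P_d(\mathbb R)$ if and only if $r\neq s$ and $2(\lambda+1)\in\left\{\frac{r-s}{r+s+2},\frac{s-r}{r+s+4}\right\}$.
   Context: Let $r,s\in(-1,\infty)$. Write $(x)_i=x(x+1)\cdots(x+i-1)$, $(x)_0=1$. For $0\le i\le d$ put $\theta_i=(d-i)(d-i+r+s+1)$ (distinct) and $\theta^*_i=i$. Put $b^*_i=\frac{(d-i)(i-d-s)(2d-2i+r+s+2)_i}{(2d-2i+r+s)_{i+1}}$ ($0\le i\le d-1$), $c^*_i=\frac{i(i-d-r-1)(d-i+r+s+1)_{d-i}}{(d-i+r+s+2)_{d-i+1}}$ ($1\le i\le d$), $b^*_d=c^*_0=0$, and $a^*_i=\theta^*_0-b^*_i-c^*_i$. Let $\mathcal P_d(\mathbb R)$ be the real polynomials of degree at most $d$, each determined by its values at $\theta_0,\dots,\theta_d$. Let $L,L^*$ be the linear maps on $\mathcal P_d(\mathbb R)$ with $(Lf)(\theta_i)=\theta_i f(\theta_i)$ and $(L^*f)(\theta_i)=b^*_i f(\theta_{i+1})+a^*_i f(\theta_i)+c^*_i f(\theta_{i-1})$ ($0\le i\le d$; terms with coefficient $b^*_d$ or $c^*_0$ omitted); $\lambda$ stands for $\lambda$ times the identity. A square matrix is irreducible tridiagonal if its nonzero entries lie on the diagonal, subdiagonal or superdiagonal and all subdiagonal and superdiagonal entries are nonzero. A Leonard pair on a nonzero finite-dimensional vector space $V$ is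 an ordered pair $A,A^*$ of linear maps on $V$ such that there is an ordered basis in which $A$ is diagonal and $A^*$ is irreducible tridiagonal, and there is an ordered basis in which $A^*$ is diagonal and $A$ is irreducible tridiagonal. *)

theory Defs
  imports "HOL-Computational_Algebra.Polynomial"
begin

definition Pd :: "nat \<Rightarrow> real poly set" where
  "Pd d = {p. degree p \<le> d}"

definition is_basis :: "real poly set \<Rightarrow> nat \<Rightarrow> (nat \<Rightarrow> real poly) \<Rightarrow> bool" where
  "is_basis V n v \<longleftrightarrow> (\<forall>i<n. v i \<in> V) \<and>
     (\<forall>x\<in>V. \<exists>!c::nat \<Rightarrow> real. (\<forall>i\<ge>n. c i = 0) \<and> x = (\<Sum>i<n. smult (c i) (v i)))"

text \<open>M is the matrix of A with respect to the basis v (columns = images of basis vectors).\<close>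
definition matrix_wrt :: "nat \<Rightarrow> (nat \<Rightarrow> real poly) \<Rightarrow> (real poly \<Rightarrow> real poly) \<Rightarrow> (nat \<Rightarrow> nat \<Rightarrow> real) \<Rightarrow> bool" where
  "matrix_wrt n v A M \<longleftrightarrow> (\<forall>j<n. A (v j) = (\<Sum>i<n. smult (M i j) (v i)))"

definition is_diagonal :: "nat \<Rightarrow> (nat \<Rightarrow> nat \<Rightarrow> real) \<Rightarrow> bool" where
  "is_diagonal n M \<longleftrightarrow> (\<forall>i<n. \<forall>j<n. i \<noteq> j \<longrightarrow> M i j = 0)"

definition irred_tridiagonal :: "nat \<Rightarrow> (nat \<Rightarrow> nat \<Rightarrow> real) \<Rightarrow> bool" where
  "irred_tridiagonal n M \<longleftrightarrow>
     (\<forall>i<n. \<forall>j<n. (i > j + 1 \<or> j > i + 1) \<longrightarrow> M i j = 0) \<and>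
     (\<forall>i. i + 1 < n \<longrightarrow> M (i + 1) i \<noteq> 0 \<and> M i (i + 1) \<noteq> 0)"

definition linear_map_on :: "real poly set \<Rightarrow> (real poly \<Rightarrow> real poly) \<Rightarrow> bool" where
  "linear_map_on V A \<longleftrightarrow> A ` V \<subseteq> V \<and>
     (\<forall>x\<in>V. \<forall>y\<in>V. A (x + y) = A x + A y) \<and> (\<forall>a. \<forall>x\<in>V. A (smult a x) = smult a (A x))"

definition diag_tridiag_basis :: "real poly set \<Rightarrow> (real poly \<Rightarrow> real poly) \<Rightarrow> (real poly \<Rightarrow> real poly) \<Rightarrow> bool" where
  "diag_tridiag_basis V A B \<longleftrightarrow>
     (\<exists>n v M N. is_basis V n v \<and> matrix_wrt n v A M \<and> is_diagonal n M \<and>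
                matrix_wrt n v B N \<and> irred_tridiagonal n N)"

definition leonard_pair :: "real poly set \<Rightarrow> (real poly \<Rightarrow> real poly) \<Rightarrow> (real poly \<Rightarrow> real poly) \<Rightarrow> bool" where
  "leonard_pair V A B \<longleftrightarrow> V \<noteq> {0} \<and> linear_map_on V A \<and> linear_map_on V B \<and>
     diag_tridiag_basis V A B \<and> diag_tridiag_basis V B A"

definition theta :: "real \<Rightarrow> real \<Rightarrow> nat \<Rightarrow> nat \<Rightarrow> real" where
  "theta r s d i = real (d - i) * (real (d - i) + r + s + 1)"

definition thetas :: "nat \<Rightarrow> real" where
  "thetas i = real i"

definition bs :: "real \<Rightarrow> real \<Rightarrow> nat \<Rightarrow> nat \<Rightarrow> real" where
  "bs r s d i = (if i < d then
      (real d - real i) * (real i - real d - s) * pochhammer (2 * real d - 2 * real i + r + s + 2) i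
        / pochhammer (2 * real d - 2 * real i + r + s) (i + 1)
    else 0)"

definition cs :: "real \<Rightarrow> real \<Rightarrow> nat \<Rightarrow> nat \<Rightarrow> real" where
  "cs r s d i = (if 1 \<le> i \<and> i \<le> d then
      real i * (real i - real d - r - 1) * pochhammer (real d - real i + r + s + 1) (d - i)
        / pochhammer (real d - real i + r + s + 2) (d - i + 1)
    else 0)"

definition as :: "real \<Rightarrow> real \<Rightarrow> nat \<Rightarrow> nat \<Rightarrow> real" where
  "as r s d i = thetas 0 - bs r s d i - cs r s d i"

definition Lmap :: "real \<Rightarrow> real \<Rightarrow> nat \<Rightarrow> real poly \<Rightarrow> real poly" where
  "Lmap r s d f = (THE g. g \<in> Pd d \<and>
     (\<forall>i\<le>d. poly g (theta r s d i) = theta r s d i * poly f (theta r s d i)))"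

text \<open>L*: terms with coefficient b*_d or c*_0 (both zero) are harmless, so are kept.\<close>
definition Lstar :: "real \<Rightarrow> real \<Rightarrow> nat \<Rightarrow> real poly \<Rightarrow> real poly" where
  "Lstar r s d f = (THE g. g \<in> Pd d \<and>
     (\<forall>i\<le>d. poly g (theta r s d i) =
        bs r s d i * poly f (theta r s d (i + 1)) + as r s d i * poly f (theta r s d i)
        + cs r s d i * poly f (theta r s d (i - 1))))"

end

theory Submission
  imports Defs
begin

text \<open>Evaluation at the distinct nodes theta_0, ..., theta_d identifies P_d(R) with R^(d+1): there
  L is the diagonal matrix diag(theta_i), L* is the tridiagonal matrix T with rows
  (c*_i, a*_i, b*_i), and B = (L* + lambda)^2 is S = (T + lambda)^2. An eigenbasis of L consists of
  rescaled Lagrange polynomials, so B is irreducible tridiagonal in such a basis iff, for some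
  ordering of the nodes, the nonzero off-diagonal entries of S form a path. For d = 2 the entries
  S_02 = b*_0 b*_1 and S_20 = c*_2 c*_1 never vanish, while S_01, S_10 vanish iff
  a*_0 + a*_1 + 2 lambda = 0 and S_12, S_21 vanish iff a*_1 + a*_2 + 2 lambda = 0; so exactly
  one of these two linear equations in lambda must hold, and their solutions coincide iff r = s.
  The other half of the Leonard pair condition holds for every lambda: L* has the
  eigenvectors 1, x - 2(r+1), x^2 - (3r+s+6)x + 2(r+1)(r+2) with eigenvalues 0, 1, 2; they
  diagonalise B, and L is irreducible tridiagonal in this basis.\<close>

section \<open>Interpolation at distinct nodes\<close>

lemma Pd_add: "f \<in> Pd d \<Longrightarrow> g \<in> Pd d \<Longrightarrow> f + g \<in> Pd d"
  unfolding Pd_def by (auto intro: order.trans[OF degree_add_le])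

lemma Pd_smult: "f \<in> Pd d \<Longrightarrow> smult a f \<in> Pd d"
  unfolding Pd_def by (auto intro: order.trans[OF degree_smult_le])

lemma Pd_sum: "(\<And>i. i \<in> I \<Longrightarrow> f i \<in> Pd d) \<Longrightarrow> sum f I \<in> Pd d"
  unfolding Pd_def by (cases "finite I") (auto intro: degree_sum_le)

lemma Pd_eqI:
  assumes t: "inj_on t {..d}" and f: "f \<in> Pd d" and g: "g \<in> Pd d"
    and vals: "\<And>i. i \<le> d \<Longrightarrow> poly f (t i) = poly g (t i)"
  shows "f = g"
proof (rule ccontr)
  assume "f \<noteq> g"
  then have h: "f - g \<noteq> 0" by simp
  have "t ` {..d} \<subseteq> {x. poly (f - g) x = 0}" using vals by auto
  then have "card (t ` {..d}) \<le> card {x. poly (f - g) x = 0}"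
    by (rule card_mono[OF poly_roots_finite[OF h]])
  also have "\<dots> \<le> degree (f - g)" by (rule card_poly_roots_bound[OF h])
  also have "\<dots> \<le> d" using f g unfolding Pd_def by (auto intro: order.trans[OF degree_diff_le])
  finally show False using card_image[OF t] by simp
qed

definition lagrange_poly :: "(nat \<Rightarrow> real) \<Rightarrow> nat \<Rightarrow> nat \<Rightarrow> real poly" where
  "lagrange_poly t d k =
     smult (inverse (\<Prod>j\<in>{..d} - {k}. t k - t j)) (\<Prod>j\<in>{..d} - {k}. [:- t j, 1:])"

lemma lagrange_poly_in_Pd: "k \<le> d \<Longrightarrow> lagrange_poly t d k \<in> Pd d"
proof -
  assume k: "k \<le> d"
  have "degree (\<Prod>j\<in>{..d} - {k}. [:- t j, 1:]) \<le> card ({..d} - {k})"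
    using degree_prod_sum_le[of "{..d} - {k}" "\<lambda>j. [:- t j, 1:]"] by simp
  also have "\<dots> = d" using k by simp
  finally show ?thesis
    unfolding Pd_def lagrange_poly_def by (auto intro: order.trans[OF degree_smult_le])
qed

lemma poly_lagrange_poly:
  assumes t: "inj_on t {..d}" and "k \<le> d" "m \<le> d"
  shows "poly (lagrange_poly t d k) (t m) = (if m = k then 1 else 0)"
proof (cases "m = k")
  case True
  have "(\<Prod>j\<in>{..d} - {k}. t k - t j) \<noteq> 0"
    using t \<open>k \<le> d\<close> by (auto dest: inj_onD)
  then show ?thesis using True by (simp add: lagrange_poly_def poly_prod)
next
  case False
  then have "m \<in> {..d} - {k}" using \<open>m \<le> d\<close> by simp
  then have "(\<Prod>j\<in>{..d} - {k}. t m - t j) = 0" by (intro prod_zero) auto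
  then show ?thesis using False by (simp add: lagrange_poly_def poly_prod)
qed

lemma Pd_interpolation:
  assumes t: "inj_on t {..d}"
  shows "\<exists>!g. g \<in> Pd d \<and> (\<forall>i\<le>d. poly g (t i) = y i)"
proof (rule ex_ex1I)
  let ?g = "\<Sum>k\<le>d. smult (y k) (lagrange_poly t d k)"
  have "poly ?g (t i) = y i" if "i \<le> d" for i
    using that by (simp add: poly_sum poly_lagrange_poly[OF t] if_distrib cong: if_cong)
  moreover have "?g \<in> Pd d" by (intro Pd_sum Pd_smult lagrange_poly_in_Pd) simp
  ultimately show "\<exists>g. g \<in> Pd d \<and> (\<forall>i\<le>d. poly g (t i) = y i)" by blast
qed (use Pd_eqI[OF t] in auto)

section \<open>Maps given by their action on values at the nodes\<close>

lemma sum_diagonal_mult: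
  "finite I \<Longrightarrow> i \<in> I \<Longrightarrow> (\<Sum>j\<in>I. (if i = j then a else 0) * x j) = a * (x i :: 'a::semiring_0)"
  by (subst sum.cong[OF refl, of _ _ "\<lambda>j. if i = j then a * x j else 0"]) auto

definition acts_on_values ::
    "(nat \<Rightarrow> real) \<Rightarrow> nat \<Rightarrow> (real poly \<Rightarrow> real poly) \<Rightarrow> (nat \<Rightarrow> nat \<Rightarrow> real) \<Rightarrow> bool" where
  "acts_on_values t d A M \<longleftrightarrow> (\<forall>f\<in>Pd d. A f \<in> Pd d \<and>
     (\<forall>i\<le>d. poly (A f) (t i) = (\<Sum>j\<le>d. M i j * poly f (t j))))"

lemma acts_on_valuesD:
  assumes "acts_on_values t d A M" "f \<in> Pd d"
  shows "A f \<in> Pd d" "i \<le> d \<Longrightarrow> poly (A f) (t i) = (\<Sum>j\<le>d. M i j * poly f (t j))"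
  using assms unfolding acts_on_values_def by blast+

lemma linear_map_on_if_acts_on_values:
  assumes t: "inj_on t {..d}" and A: "acts_on_values t d A M"
  shows "linear_map_on (Pd d) A"
  unfolding linear_map_on_def
proof (intro conjI ballI allI)
  show "A ` Pd d \<subseteq> Pd d" using acts_on_valuesD(1)[OF A] by blast
next
  fix f g assume f: "f \<in> Pd d" and g: "g \<in> Pd d"
  show "A (f + g) = A f + A g"
    by (rule Pd_eqI[OF t])
      (simp_all add: Pd_add f g acts_on_valuesD[OF A] sum.distrib algebra_simps)
next
  fix a f assume f: "f \<in> Pd d"
  show "A (smult a f) = smult a (A f)"
    by (rule Pd_eqI[OF t])
      (simp_all add: Pd_smult f acts_on_valuesD[OF A] sum_distrib_left algebra_simps)
qed

lemma acts_on_values_shift: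
  assumes "acts_on_values t d A M"
  shows "acts_on_values t d (\<lambda>f. A f + smult c f) (\<lambda>i j. M i j + (if i = j then c else 0))"
  unfolding acts_on_values_def
proof (intro ballI conjI allI impI)
  fix f assume f: "f \<in> Pd d"
  show "A f + smult c f \<in> Pd d" by (intro Pd_add Pd_smult acts_on_valuesD[OF assms f] f)
  fix i assume "i \<le> d"
  then show "poly (A f + smult c f) (t i)
      = (\<Sum>j\<le>d. (M i j + (if i = j then c else 0)) * poly f (t j))"
    by (simp add: acts_on_valuesD[OF assms f] distrib_right sum.distrib sum_diagonal_mult)
qed

definition matrix_mult :: "nat \<Rightarrow> (nat \<Rightarrow> nat \<Rightarrow> real) \<Rightarrow> (nat \<Rightarrow> nat \<Rightarrow> real) \<Rightarrow> nat \<Rightarrow> nat \<Rightarrow> real" where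
  "matrix_mult d M N i j = (\<Sum>k\<le>d. M i k * N k j)"

lemma acts_on_values_comp:
  assumes "acts_on_values t d A M" "acts_on_values t d B N"
  shows "acts_on_values t d (\<lambda>f. A (B f)) (matrix_mult d M N)"
  unfolding acts_on_values_def matrix_mult_def
proof (intro ballI conjI allI impI)
  fix f assume f: "f \<in> Pd d"
  show "A (B f) \<in> Pd d" using acts_on_valuesD(1)[OF assms(1) acts_on_valuesD(1)[OF assms(2) f]] .
  fix i assume "i \<le> d"
  then show "poly (A (B f)) (t i) = (\<Sum>j\<le>d. (\<Sum>k\<le>d. M i k * N k j) * poly f (t j))"
    by (simp add: acts_on_valuesD[OF assms(1) acts_on_valuesD(1)[OF assms(2) f]]
        acts_on_valuesD(2)[OF assms(2) f] sum_distrib_left sum_distrib_right mult.assoc)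
      (rule sum.swap)
qed

lemma acts_on_values_eigenvector:
  assumes t: "inj_on t {..d}" and A: "acts_on_values t d A M" and u: "u \<in> Pd d"
    and eigen: "\<And>i. i \<le> d \<Longrightarrow> (\<Sum>j\<le>d. M i j * poly u (t j)) = \<mu> * poly u (t i)"
  shows "A u = smult \<mu> u"
  by (rule Pd_eqI[OF t]) (simp_all add: acts_on_valuesD[OF A u] Pd_smult u eigen)

lemma matrix_wrt_if_values:
  assumes t: "inj_on t {..d}" and v: "\<And>i. i < n \<Longrightarrow> v i \<in> Pd d"
    and A: "\<And>j. j < n \<Longrightarrow> A (v j) \<in> Pd d"
    and vals: "\<And>j m. j < n \<Longrightarrow> m \<le> d \<Longrightarrow>
      poly (A (v j)) (t m) = (\<Sum>i<n. M i j * poly (v i) (t m))"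
  shows "matrix_wrt n v A M"
  unfolding matrix_wrt_def
  by (intro allI impI Pd_eqI[OF t] A Pd_sum Pd_smult v) (simp_all add: vals poly_sum)

lemma is_basis_permuted_lagrange:
  assumes t: "inj_on t {..d}" and k: "bij_betw k {..d} {..d}"
  shows "is_basis (Pd d) (Suc d) (\<lambda>j. lagrange_poly t d (k j))"
proof -
  have kd: "j \<le> d \<Longrightarrow> k j \<le> d" for j using bij_betw_apply[OF k] by simp
  have coeff_at_node: "poly (\<Sum>i<Suc d. smult (c i) (lagrange_poly t d (k i))) (t (k j)) = c j"
    if j: "j \<le> d" for c j
  proof -
    have "poly (lagrange_poly t d (k i)) (t (k j)) = (if i = j then 1 else 0)" if "i < Suc d" for i
      using that j kd bij_betw_imp_inj_on[OF k]
      by (auto simp: poly_lagrange_poly[OF t] dest: inj_onD)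
    then have "poly (\<Sum>i<Suc d. smult (c i) (lagrange_poly t d (k i))) (t (k j))
        = (\<Sum>i<Suc d. if i = j then c i else 0)"
      unfolding poly_sum by (intro sum.cong) auto
    then show ?thesis using j by (simp del: sum.lessThan_Suc)
  qed
  show ?thesis
    unfolding is_basis_def
  proof (intro conjI allI impI ballI)
    show "lagrange_poly t d (k i) \<in> Pd d" if "i < Suc d" for i
      using that kd by (simp add: lagrange_poly_in_Pd)
  next
    fix x assume x: "x \<in> Pd d"
    define c where "c i = (if i \<le> d then poly x (t (k i)) else 0)" for i
    have "x = (\<Sum>i<Suc d. smult (c i) (lagrange_poly t d (k i)))"
    proof (rule Pd_eqI[OF t x])
      show "(\<Sum>i<Suc d. smult (c i) (lagrange_poly t d (k i))) \<in> Pd d"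
        using kd by (intro Pd_sum Pd_smult lagrange_poly_in_Pd) simp
      fix m assume "m \<le> d"
      then obtain j where "j \<le> d" "m = k j" using bij_betw_imp_surj_on[OF k] by force
      then show "poly x (t m) = poly (\<Sum>i<Suc d. smult (c i) (lagrange_poly t d (k i))) (t m)"
        using coeff_at_node[of j c] by (simp add: c_def del: sum.lessThan_Suc)
    qed
    moreover have "c' = c" if "\<forall>i\<ge>Suc d. c' i = 0"
      and "x = (\<Sum>i<Suc d. smult (c' i) (lagrange_poly t d (k i)))" for c'
      using that coeff_at_node[of _ c'] by (auto simp: c_def not_le)
    ultimately show "\<exists>!c. (\<forall>i\<ge>Suc d. c i = 0) \<and>
        x = (\<Sum>i<Suc d. smult (c i) (lagrange_poly t d (k i)))"
      by (intro ex1I[of _ c]) (auto simp: c_def)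
  qed
qed

lemma span_if_degree_eq:
  fixes v :: "nat \<Rightarrow> 'a::field poly"
  assumes v: "\<And>i. i < n \<Longrightarrow> v i \<noteq> 0 \<and> degree (v i) = i"
    and x: "x = 0 \<or> degree x < n"
  shows "\<exists>c. (\<forall>i\<ge>n. c i = 0) \<and> x = (\<Sum>i<n. smult (c i) (v i))"
  using assms
proof (induction n arbitrary: x)
  case 0
  then show ?case by (intro exI[of _ "\<lambda>_. 0"]) simp
next
  case (Suc n)
  define a where "a = coeff x n / lead_coeff (v n)"
  define y where "y = x - smult a (v n)"
  have vn: "v n \<noteq> 0" "degree (v n) = n" using Suc.prems(1) by auto
  have "coeff (v n) n \<noteq> 0" using vn by (metis leading_coeff_0_iff)
  then have "coeff y n = 0" using vn by (simp add: y_def a_def)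
  moreover have "degree y \<le> n"
    using Suc.prems(2) vn unfolding y_def by (intro degree_diff_le) auto
  ultimately have "y = 0 \<or> degree y < n" by (metis le_neq_implies_less leading_coeff_0_iff)
  then obtain c where c: "\<forall>i\<ge>n. c i = 0" "y = (\<Sum>i<n. smult (c i) (v i))"
    using Suc.IH Suc.prems(1) by force
  show ?case
  proof (intro exI conjI)
    show "\<forall>i\<ge>Suc n. (c(n := a)) i = 0" using c(1) by simp
    have "(\<Sum>i<n. smult ((c(n := a)) i) (v i)) = y" unfolding c(2) by (intro sum.cong) auto
    then show "x = (\<Sum>i<Suc n. smult ((c(n := a)) i) (v i))" by (simp add: y_def)
  qed
qed

lemma independent_if_degree_eq:
  fixes v :: "nat \<Rightarrow> 'a::field poly"
  assumes v: "\<And>i. i < n \<Longrightarrow> v i \<noteq> 0 \<and> degree (v i) = i"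
    and zero: "(\<Sum>i<n. smult (c i) (v i)) = 0" and "j < n"
  shows "c j = 0"
  using assms
proof (induction n)
  case (Suc n)
  have "coeff (\<Sum>i<n. smult (c i) (v i)) n = 0"
    using Suc.prems(1) by (simp add: coeff_sum coeff_eq_0)
  then have "c n * lead_coeff (v n) = 0"
    using arg_cong[OF Suc.prems(2), of "\<lambda>p. coeff p n"] Suc.prems(1)[of n] by simp
  then have "c n = 0" using Suc.prems(1)[of n] leading_coeff_0_iff[of "v n"] by auto
  then show ?case using Suc by (cases "j = n") auto
qed simp

lemma is_basis_if_degree_eq:
  assumes v: "\<And>i. i \<le> d \<Longrightarrow> v i \<noteq> 0 \<and> degree (v i) = i"
  shows "is_basis (Pd d) (Suc d) v"
  unfolding is_basis_def
proof (intro conjI allI impI ballI ex_ex1I)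
  show "v i \<in> Pd d" if "i < Suc d" for i using v[of i] that by (simp add: Pd_def)
next
  fix x assume "x \<in> Pd d"
  then show "\<exists>c. (\<forall>i\<ge>Suc d. c i = 0) \<and> x = (\<Sum>i<Suc d. smult (c i) (v i))"
    using v by (intro span_if_degree_eq) (auto simp: Pd_def)
next
  fix x c c' assume c: "(\<forall>i\<ge>Suc d. c i = 0) \<and> x = (\<Sum>i<Suc d. smult (c i) (v i))"
    and c': "(\<forall>i\<ge>Suc d. c' i = 0) \<and> x = (\<Sum>i<Suc d. smult (c' i) (v i))"
  have "(\<Sum>i<Suc d. smult (c i - c' i) (v i)) = 0"
    using c c' by (simp add: smult_diff_left sum_subtractf)
  then have "c i - c' i = 0" if "i < Suc d" for i
    using v that by (intro independent_if_degree_eq[of "Suc d" v]) auto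
  then show "c = c'" using c c' by (metis eq_iff_diff_eq_0 not_less ext)
qed

lemma is_basis_independent:
  assumes v: "is_basis V n v" and "0 \<in> V"
    and c: "\<forall>i\<ge>n. c i = 0" "(\<Sum>i<n. smult (c i) (v i)) = 0"
  shows "c j = 0"
proof -
  have "\<exists>!c. (\<forall>i\<ge>n. c i = 0) \<and> 0 = (\<Sum>i<n. smult (c i) (v i))"
    using v \<open>0 \<in> V\<close> unfolding is_basis_def by blast
  moreover have "(\<forall>i\<ge>n. (\<lambda>_. 0) i = 0) \<and> 0 = (\<Sum>i<n. smult ((\<lambda>_. 0) i) (v i))" by simp
  ultimately have "c = (\<lambda>_. 0)" using c by (auto elim: ex1E)
  then show ?thesis by simp
qed

lemma is_basis_nonzero:
  assumes v: "is_basis V n v" and "0 \<in> V" and j: "j < n"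
  shows "v j \<noteq> 0"
proof
  assume "v j = 0"
  have "(\<Sum>i<n. smult (if i = j then 1 else 0) (v i)) = (\<Sum>i<n. if i = j then v j else 0)"
    by (rule sum.cong) auto
  also have "\<dots> = 0" using \<open>v j = 0\<close> by simp
  finally have "(\<lambda>i. if i = j then 1 else 0::real) j = 0"
    by (rule is_basis_independent[OF v \<open>0 \<in> V\<close>, rotated]) (use j in auto)
  then show False by simp
qed

lemma matrix_wrt_diagonal_eigenvector:
  assumes "matrix_wrt n v A M" "is_diagonal n M" "j < n"
  shows "A (v j) = smult (M j j) (v j)"
proof -
  have "A (v j) = (\<Sum>i<n. smult (M i j) (v i))" using assms unfolding matrix_wrt_def by blast
  also have "\<dots> = (\<Sum>i<n. if i = j then smult (M j j) (v j) else 0)"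
    using assms unfolding is_diagonal_def by (intro sum.cong) auto
  finally show ?thesis using assms by simp
qed

section \<open>Bases diagonalising multiplication by the node\<close>

lemma eigenvector_of_node_multiplication:
  assumes t: "inj_on t {..d}" and A: "acts_on_values t d A (\<lambda>i j. if i = j then t i else 0)"
    and u: "u \<in> Pd d" "u \<noteq> 0" and eigen: "A u = smult \<mu> u"
  obtains m where "m \<le> d" "\<mu> = t m" "\<And>m'. m' \<le> d \<Longrightarrow> poly u (t m') = 0 \<longleftrightarrow> m' \<noteq> m"
proof -
  have vals: "(t m - \<mu>) * poly u (t m) = 0" if "m \<le> d" for m
  proof -
    have "\<mu> * poly u (t m) = t m * poly u (t m)"
      using acts_on_valuesD(2)[OF A u(1) that] by (simp add: eigen sum_diagonal_mult that)
    then show ?thesis by (auto simp: algebra_simps)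
  qed
  obtain m where m: "m \<le> d" "poly u (t m) \<noteq> 0"
    using u Pd_eqI[OF t u(1), of 0] by (auto simp: Pd_def)
  then have "\<mu> = t m" using vals[of m] by simp
  moreover have "poly u (t m') = 0 \<longleftrightarrow> m' \<noteq> m" if "m' \<le> d" for m'
    using vals[OF that] m that \<open>\<mu> = t m\<close> inj_onD[OF t, of m' m] by auto
  ultimately show ?thesis using m that by blast
qed

lemma diagonal_basis_of_node_multiplication:
  assumes t: "inj_on t {..d}" and A: "acts_on_values t d A (\<lambda>i j. if i = j then t i else 0)"
    and v: "is_basis (Pd d) n v" and M: "matrix_wrt n v A M" "is_diagonal n M"
  obtains k where "bij_betw k {..<n} {..d}"
    and "\<And>j m. j < n \<Longrightarrow> m \<le> d \<Longrightarrow> poly (v j) (t m) = 0 \<longleftrightarrow> m \<noteq> k j"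
proof -
  have vPd: "v j \<in> Pd d" if "j < n" for j using v that unfolding is_basis_def by blast
  have indep: "c j = 0" if "\<forall>i\<ge>n. c i = 0" "(\<Sum>i<n. smult (c i) (v i)) = 0" for c j
    using is_basis_independent[OF v _ that] by (simp add: Pd_def)
  have "v j \<noteq> 0" if "j < n" for j
    using is_basis_nonzero[OF v _ that] by (simp add: Pd_def)
  moreover have "A (v j) = smult (M j j) (v j)" if "j < n" for j
    using matrix_wrt_diagonal_eigenvector[OF M that] .
  ultimately have "\<forall>j\<in>{..<n}. \<exists>m\<le>d. \<forall>m'\<le>d. poly (v j) (t m') = 0 \<longleftrightarrow> m' \<noteq> m"
    using eigenvector_of_node_multiplication[OF t A vPd] by (metis lessThan_iff)
  then obtain k where k: "\<And>j. j < n \<Longrightarrow> k j \<le> d"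
    and supp: "\<And>j m. j < n \<Longrightarrow> m \<le> d \<Longrightarrow> poly (v j) (t m) = 0 \<longleftrightarrow> m \<noteq> k j"
    by (metis lessThan_iff)
  have "inj_on k {..<n}"
  proof (rule inj_onI, rule ccontr)
    fix j j' assume j: "j \<in> {..<n}" and j': "j' \<in> {..<n}" and "k j = k j'" "j \<noteq> j'"
    define c where "c i = (if i = j then poly (v j') (t (k j))
      else if i = j' then - poly (v j) (t (k j)) else 0)" for i
    have "(\<Sum>i<n. smult (c i) (v i)) = (\<Sum>i<n. (if i = j then smult (c j) (v j) else 0)
        + (if i = j' then smult (c j') (v j') else 0))"
      using \<open>j \<noteq> j'\<close> by (intro sum.cong) (auto simp: c_def)
    also have "\<dots> = smult (c j) (v j) + smult (c j') (v j')"
      using j j' by (simp add: sum.distrib)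
    also have "\<dots> = 0"
    proof (rule Pd_eqI[OF t])
      show "smult (c j) (v j) + smult (c j') (v j') \<in> Pd d"
        using j j' by (intro Pd_add Pd_smult vPd) auto
      show "poly (smult (c j) (v j) + smult (c j') (v j')) (t m) = poly 0 (t m)" if "m \<le> d" for m
        using supp[of j m] supp[of j' m] j j' \<open>k j = k j'\<close> \<open>j \<noteq> j'\<close> that
        by (cases "m = k j") (auto simp: c_def)
    qed (simp add: Pd_def)
    finally have "c j = 0" using j j' by (intro indep) (auto simp: c_def)
    then show False using supp[of j' "k j"] j j' k \<open>k j = k j'\<close> \<open>j \<noteq> j'\<close> by (simp add: c_def)
  qed
  moreover have "m \<in> k ` {..<n}" if m: "m \<le> d" for m
  proof (rule ccontr)
    assume not_hit: "m \<notin> k ` {..<n}"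
    obtain c where "lagrange_poly t d m = (\<Sum>i<n. smult (c i) (v i))"
      using v lagrange_poly_in_Pd[OF m] unfolding is_basis_def by blast
    then have "poly (lagrange_poly t d m) (t m) = (\<Sum>i<n. c i * poly (v i) (t m))"
      by (simp add: poly_sum)
    also have "\<dots> = 0" using supp not_hit m by (intro sum.neutral) auto
    finally show False using poly_lagrange_poly[OF t m m] by simp
  qed
  ultimately have "bij_betw k {..<n} {..d}" using k unfolding bij_betw_def by auto
  then show ?thesis using that supp by blast
qed

lemma matrix_wrt_zero_iff:
  assumes t: "inj_on t {..d}" and B: "acts_on_values t d B S" and N: "matrix_wrt n v B N"
    and vPd: "\<And>j. j < n \<Longrightarrow> v j \<in> Pd d" and k: "inj_on k {..<n}" "\<And>j. j < n \<Longrightarrow> k j \<le> d"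
    and supp: "\<And>j m. j < n \<Longrightarrow> m \<le> d \<Longrightarrow> poly (v j) (t m) = 0 \<longleftrightarrow> m \<noteq> k j"
    and ij: "i < n" "j < n"
  shows "N i j = 0 \<longleftrightarrow> S (k i) (k j) = 0"
proof -
  have "poly (B (v j)) (t (k i)) = (\<Sum>l<n. N l j * poly (v l) (t (k i)))"
    using N ij unfolding matrix_wrt_def by (simp add: poly_sum)
  also have "\<dots> = (\<Sum>l<n. if l = i then N i j * poly (v i) (t (k i)) else 0)"
    using supp k ij by (intro sum.cong) (auto dest: inj_onD)
  finally have "poly (B (v j)) (t (k i)) = N i j * poly (v i) (t (k i))" using ij by simp
  moreover have "poly (B (v j)) (t (k i)) = (\<Sum>m\<le>d. S (k i) m * poly (v j) (t m))"
    using acts_on_valuesD(2)[OF B vPd] ij k by simp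
  moreover have "\<dots> = (\<Sum>m\<le>d. if m = k j then S (k i) (k j) * poly (v j) (t (k j)) else 0)"
    using supp ij by (intro sum.cong) auto
  ultimately have "N i j * poly (v i) (t (k i)) = S (k i) (k j) * poly (v j) (t (k j))"
    using ij k by simp
  then show ?thesis using supp[of i "k i"] supp[of j "k j"] ij k by auto
qed

lemma irred_tridiagonal_cong_zero:
  assumes "\<And>i j. i < n \<Longrightarrow> j < n \<Longrightarrow> M i j = 0 \<longleftrightarrow> N i j = 0"
  shows "irred_tridiagonal n M \<longleftrightarrow> irred_tridiagonal n N"
  unfolding irred_tridiagonal_def by (simp add: assms)

lemma matrix_wrt_permuted_lagrange:
  assumes t: "inj_on t {..d}" and k: "bij_betw k {..d} {..d}" and B: "acts_on_values t d B S"
  shows "matrix_wrt (Suc d) (\<lambda>j. lagrange_poly t d (k j)) B (\<lambda>i j. S (k i) (k j))"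
proof (rule matrix_wrt_if_values[OF t])
  have kd: "j \<le> d \<Longrightarrow> k j \<le> d" for j using bij_betw_apply[OF k] by simp
  show vPd: "lagrange_poly t d (k j) \<in> Pd d" if "j < Suc d" for j
    using that kd by (simp add: lagrange_poly_in_Pd)
  show "B (lagrange_poly t d (k j)) \<in> Pd d" if "j < Suc d" for j
    using acts_on_valuesD(1)[OF B vPd[OF that]] .
  have vals: "poly (lagrange_poly t d (k j)) (t m) = (if m = k j then 1 else 0)"
    if "j < Suc d" "m \<le> d" for j m
    using that kd by (simp add: poly_lagrange_poly[OF t])
  have reindex: "(\<Sum>i<Suc d. g (k i)) = (\<Sum>l\<le>d. g l)" for g :: "nat \<Rightarrow> real"
    using sum.reindex_bij_betw[OF k, of g] by (simp add: lessThan_Suc_atMost)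
  fix j m assume jm: "j < Suc d" "m \<le> d"
  have "poly (B (lagrange_poly t d (k j))) (t m) = (\<Sum>l\<le>d. S m l * (if l = k j then 1 else 0))"
    using jm by (simp add: acts_on_valuesD(2)[OF B vPd] vals)
  also have "\<dots> = S m (k j)"
    using jm kd by (simp add: if_distrib[of "\<lambda>x. _ * x"] cong: if_cong)
  also have "\<dots> = (\<Sum>l\<le>d. S l (k j) * (if m = l then 1 else 0))"
    using jm by (simp add: if_distrib[of "\<lambda>x. _ * x"] cong: if_cong)
  also have "\<dots> = (\<Sum>i<Suc d. S (k i) (k j) * poly (lagrange_poly t d (k i)) (t m))"
    using jm by (simp add: vals reindex[of "\<lambda>l. S l (k j) * (if m = l then 1 else 0)"]
        del: sum.lessThan_Suc)
  finally show "poly (B (lagrange_poly t d (k j))) (t m)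
      = (\<Sum>i<Suc d. S (k i) (k j) * poly (lagrange_poly t d (k i)) (t m))" .
qed

lemma diag_tridiag_basis_node_multiplication_iff:
  assumes t: "inj_on t {..d}" and A: "acts_on_values t d A (\<lambda>i j. if i = j then t i else 0)"
    and B: "acts_on_values t d B S"
  shows "diag_tridiag_basis (Pd d) A B \<longleftrightarrow>
    (\<exists>k. bij_betw k {..d} {..d} \<and> irred_tridiagonal (Suc d) (\<lambda>i j. S (k i) (k j)))"
proof
  assume "diag_tridiag_basis (Pd d) A B"
  then obtain n v M N where v: "is_basis (Pd d) n v" and M: "matrix_wrt n v A M" "is_diagonal n M"
    and N: "matrix_wrt n v B N" "irred_tridiagonal n N"
    unfolding diag_tridiag_basis_def by blast
  obtain k where k: "bij_betw k {..<n} {..d}"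
    and supp: "\<And>j m. j < n \<Longrightarrow> m \<le> d \<Longrightarrow> poly (v j) (t m) = 0 \<longleftrightarrow> m \<noteq> k j"
    using diagonal_basis_of_node_multiplication[OF t A v M] by blast
  have n: "n = Suc d" using bij_betw_same_card[OF k] by simp
  have "irred_tridiagonal n (\<lambda>i j. S (k i) (k j))"
  proof (subst irred_tridiagonal_cong_zero)
    show "S (k i) (k j) = 0 \<longleftrightarrow> N i j = 0" if "i < n" "j < n" for i j
      using v that bij_betw_apply[OF k] supp
      by (intro matrix_wrt_zero_iff[OF t B N(1), symmetric] bij_betw_imp_inj_on[OF k])
        (auto simp: is_basis_def)
  qed (rule N(2))
  moreover have "bij_betw k {..d} {..d}" using k by (simp add: n lessThan_Suc_atMost)
  ultimately show "\<exists>k. bij_betw k {..d} {..d} \<and> irred_tridiagonal (Suc d) (\<lambda>i j. S (k i) (k j))"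
    using n by blast
next
  assume "\<exists>k. bij_betw k {..d} {..d} \<and> irred_tridiagonal (Suc d) (\<lambda>i j. S (k i) (k j))"
  then obtain k where k: "bij_betw k {..d} {..d}"
    and irred: "irred_tridiagonal (Suc d) (\<lambda>i j. S (k i) (k j))" by blast
  have "is_diagonal (Suc d) (\<lambda>i j. if k i = k j then t (k i) else 0)"
    using bij_betw_imp_inj_on[OF k] unfolding is_diagonal_def by (auto dest: inj_onD)
  then show "diag_tridiag_basis (Pd d) A B"
    unfolding diag_tridiag_basis_def
    using is_basis_permuted_lagrange[OF t k] matrix_wrt_permuted_lagrange[OF t k A]
      matrix_wrt_permuted_lagrange[OF t k B] irred by blast
qed

lemma irred_tridiagonal_3_iff:
  "irred_tridiagonal 3 N \<longleftrightarrow> N 0 2 = 0 \<and> N 2 0 = 0 \<and>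
     N 0 1 \<noteq> 0 \<and> N 1 0 \<noteq> 0 \<and> N 1 2 \<noteq> 0 \<and> N 2 1 \<noteq> 0"
  unfolding irred_tridiagonal_def
  by (auto simp: less_Suc_eq numeral_3_eq_3 numeral_2_eq_2 all_conj_distrib)

lemma irred_tridiagonal_3_permuted_iff:
  fixes S :: "nat \<Rightarrow> nat \<Rightarrow> real"
  assumes S: "S 0 2 \<noteq> 0" "S 2 0 \<noteq> 0" "S 0 1 = 0 \<longleftrightarrow> S 1 0 = 0" "S 1 2 = 0 \<longleftrightarrow> S 2 1 = 0"
  shows "(\<exists>k. bij_betw k {..2} {..2} \<and> irred_tridiagonal 3 (\<lambda>i j. S (k i) (k j)))
    \<longleftrightarrow> (S 0 1 = 0 \<longleftrightarrow> S 1 2 \<noteq> 0)"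
proof
  assume "\<exists>k. bij_betw k {..2} {..2} \<and> irred_tridiagonal 3 (\<lambda>i j. S (k i) (k j))"
  then obtain k where k: "bij_betw k {..2} {..2}"
    and irred: "irred_tridiagonal 3 (\<lambda>i j. S (k i) (k j))" by blast
  have range: "k i = 0 \<or> k i = 1 \<or> k i = 2" if "i \<le> 2" for i
    using bij_betw_apply[OF k, of i] that by auto
  have "k 0 \<noteq> k 1" "k 0 \<noteq> k 2" "k 1 \<noteq> k 2"
    using bij_betw_imp_inj_on[OF k] by (auto dest: inj_onD)
  then show "S 0 1 = 0 \<longleftrightarrow> S 1 2 \<noteq> 0"
    using range[of 0] range[of 1] range[of 2] irred S unfolding irred_tridiagonal_3_iff
    by auto
next
  assume pattern: "S 0 1 = 0 \<longleftrightarrow> S 1 2 \<noteq> 0"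
  have atMost_2: "{..2::nat} = {0, 1, 2}" by auto
  show "\<exists>k. bij_betw k {..2} {..2} \<and> irred_tridiagonal 3 (\<lambda>i j. S (k i) (k j))"
  \<comment> \<open>order the indices along the path 0 - 2 - 1, resp. 1 - 0 - 2\<close>
  proof (cases "S 0 1 = 0")
    case True
    let ?k = "\<lambda>i::nat. if i = 1 then 2 else if i = 2 then 1 else i"
    have "bij_betw ?k {..2} {..2}" unfolding atMost_2 bij_betw_def inj_on_def by auto
    moreover have "irred_tridiagonal 3 (\<lambda>i j. S (?k i) (?k j))"
      using True pattern S unfolding irred_tridiagonal_3_iff by simp
    ultimately show ?thesis by blast
  next
    case False
    let ?k = "\<lambda>i::nat. if i = 0 then 1 else if i = 1 then 0 else i"
    have "bij_betw ?k {..2} {..2}" unfolding atMost_2 bij_betw_def inj_on_def by auto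
    moreover have "irred_tridiagonal 3 (\<lambda>i j. S (?k i) (?k j))"
      using False pattern S unfolding irred_tridiagonal_3_iff by simp
    ultimately show ?thesis by blast
  qed
qed

lemma inj_on_theta:
  assumes "r > -1" "s > -1"
  shows "inj_on (theta r s d) {..d}"
proof (rule inj_onI)
  fix i j assume ij: "i \<in> {..d}" "j \<in> {..d}" and eq: "theta r s d i = theta r s d j"
  define a b where "a = real (d - i)" and "b = real (d - j)"
  have "(a - b) * (a + b + r + s + 1) = 0"
    using eq unfolding theta_def a_def[symmetric] b_def[symmetric] by (simp add: algebra_simps)
  moreover have "a + b + r + s + 1 > 0" if "a \<noteq> b"
  proof -
    have "d - i \<noteq> d - j" using that unfolding a_def b_def by simp
    then have "real ((d - i) + (d - j)) \<ge> 1" by simp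
    then have "a + b \<ge> 1" unfolding a_def b_def by simp
    then show ?thesis using assms by linarith
  qed
  ultimately have "a = b" by (cases "a = b") auto
  then show "i = j" using ij unfolding a_def b_def by auto
qed

lemma acts_on_values_Lmap:
  assumes "r > -1" "s > -1"
  shows "acts_on_values (theta r s d) d (Lmap r s d) (\<lambda>i j. if i = j then theta r s d i else 0)"
  unfolding acts_on_values_def
proof (intro ballI conjI allI impI)
  fix f
  let ?P = "\<lambda>g. g \<in> Pd d \<and> (\<forall>i\<le>d. poly g (theta r s d i) = theta r s d i * poly f (theta r s d i))"
  have "?P (Lmap r s d f)"
    unfolding Lmap_def by (rule theI'[OF Pd_interpolation[OF inj_on_theta[OF assms]]])
  then show "Lmap r s d f \<in> Pd d" by blast
  fix i assume "i \<le> d"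
  then show "poly (Lmap r s d f) (theta r s d i) =
      (\<Sum>j\<le>d. (if i = j then theta r s d i else 0) * poly f (theta r s d j))"
    using \<open>?P (Lmap r s d f)\<close> by (simp add: sum_diagonal_mult)
qed

definition lstar_matrix :: "real \<Rightarrow> real \<Rightarrow> nat \<Rightarrow> nat \<Rightarrow> nat \<Rightarrow> real" where
  "lstar_matrix r s d i j =
     (if j = i + 1 then bs r s d i else if j = i then as r s d i
      else if i = j + 1 then cs r s d i else 0)"

lemma as_eq: "as r s d i = - bs r s d i - cs r s d i"
  by (simp add: as_def thetas_def)

lemma bs_last: "bs r s d d = 0" and cs_first: "cs r s d 0 = 0"
  by (simp_all add: bs_def cs_def)

lemma sum_lstar_matrix:
  assumes "i \<le> d"
  shows "(\<Sum>j\<le>d. lstar_matrix r s d i j * x j) =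
    bs r s d i * x (i + 1) + as r s d i * x i + cs r s d i * x (i - 1)"
proof -
  have split: "(\<Sum>j\<le>d. lstar_matrix r s d i j * x j)
      = (\<Sum>j\<le>d. if j = i + 1 then bs r s d i * x j else 0)
      + (\<Sum>j\<le>d. if j = i then as r s d i * x j else 0)
      + (\<Sum>j\<le>d. if i = j + 1 then cs r s d i * x j else 0)"
    unfolding sum.distrib[symmetric] by (intro sum.cong) (auto simp: lstar_matrix_def)
  have bs_sum: "(\<Sum>j\<le>d. if j = i + 1 then bs r s d i * x j else 0) = bs r s d i * x (i + 1)"
    using assms by (simp add: bs_def)
  have cs_sum: "(\<Sum>j\<le>d. if i = j + 1 then cs r s d i * x j else 0) = cs r s d i * x (i - 1)"
  proof (cases i)
    case (Suc i')
    then have "(\<Sum>j\<le>d. if i = j + 1 then cs r s d i * x j else 0)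
        = (\<Sum>j\<le>d. if i' = j then cs r s d i * x j else 0)"
      by (intro sum.cong) auto
    then show ?thesis using assms Suc by simp
  qed (simp add: cs_first)
  show ?thesis using assms split bs_sum cs_sum by simp
qed

lemma acts_on_values_Lstar:
  assumes "r > -1" "s > -1"
  shows "acts_on_values (theta r s d) d (Lstar r s d) (lstar_matrix r s d)"
  unfolding acts_on_values_def
proof (intro ballI conjI allI impI)
  fix f
  let ?P = "\<lambda>g. g \<in> Pd d \<and> (\<forall>i\<le>d. poly g (theta r s d i) =
        bs r s d i * poly f (theta r s d (i + 1)) + as r s d i * poly f (theta r s d i)
        + cs r s d i * poly f (theta r s d (i - 1)))"
  have "?P (Lstar r s d f)"
    unfolding Lstar_def by (rule theI'[OF Pd_interpolation[OF inj_on_theta[OF assms]]])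
  then show "Lstar r s d f \<in> Pd d" by blast
  fix i assume "i \<le> d"
  then show "poly (Lstar r s d f) (theta r s d i)
      = (\<Sum>j\<le>d. lstar_matrix r s d i j * poly f (theta r s d j))"
    using \<open>?P (Lstar r s d f)\<close> by (simp add: sum_lstar_matrix)
qed

definition lstar_shift_matrix :: "real \<Rightarrow> real \<Rightarrow> nat \<Rightarrow> real \<Rightarrow> nat \<Rightarrow> nat \<Rightarrow> real" where
  "lstar_shift_matrix r s d lam i j = lstar_matrix r s d i j + (if i = j then lam else 0)"

lemma acts_on_values_Lstar_shift_square:
  assumes "r > -1" "s > -1"
  shows "acts_on_values (theta r s d) d
    (\<lambda>f. Lstar r s d (Lstar r s d f + smult lam f) + smult lam (Lstar r s d f + smult lam f))
    (matrix_mult d (lstar_shift_matrix r s d lam) (lstar_shift_matrix r s d lam))"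
  using acts_on_values_comp[OF acts_on_values_shift acts_on_values_shift,
      OF acts_on_values_Lstar acts_on_values_Lstar, OF assms assms]
  unfolding lstar_shift_matrix_def .

section \<open>The case d = 2\<close>

lemma lstar_shift_square_entries:
  fixes r s lam :: real
  defines "S \<equiv> matrix_mult 2 (lstar_shift_matrix r s 2 lam) (lstar_shift_matrix r s 2 lam)"
  shows "S 0 2 = bs r s 2 0 * bs r s 2 1" "S 2 0 = cs r s 2 2 * cs r s 2 1"
    "S 0 1 = bs r s 2 0 * (as r s 2 0 + as r s 2 1 + 2 * lam)"
    "S 1 0 = cs r s 2 1 * (as r s 2 0 + as r s 2 1 + 2 * lam)"
    "S 1 2 = bs r s 2 1 * (as r s 2 1 + as r s 2 2 + 2 * lam)"
    "S 2 1 = cs r s 2 2 * (as r s 2 1 + as r s 2 2 + 2 * lam)"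
  by (simp_all add: S_def matrix_mult_def lstar_shift_matrix_def lstar_matrix_def numeral_2_eq_2
      algebra_simps)

lemma bs_cs_2:
  "bs r s 2 0 = - 2 * (s + 2) / (r + s + 4)"
  "bs r s 2 1 = - (s + 1) * (r + s + 4) / ((r + s + 2) * (r + s + 3))"
  "cs r s 2 1 = - (r + 2) * (r + s + 2) / ((r + s + 3) * (r + s + 4))"
  "cs r s 2 2 = - 2 * (r + 1) / (r + s + 2)"
  by (simp_all add: bs_def cs_def pochhammer_Suc eval_nat_numeral algebra_simps)

text \<open>Found by solving (lstar_matrix r s 2) u = j u for the values of u at the nodes.\<close>

definition lstar_eigenpoly :: "real \<Rightarrow> real \<Rightarrow> nat \<Rightarrow> real poly" where
  "lstar_eigenpoly r s j = (if j = 0 then 1 else if j = 1 then [:- 2 * (r + 1), 1:]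
     else [:2 * (r + 1) * (r + 2), - (3 * r + s + 6), 1:])"

lemma degree_lstar_eigenpoly:
  "j \<le> 2 \<Longrightarrow> lstar_eigenpoly r s j \<noteq> 0 \<and> degree (lstar_eigenpoly r s j) = j"
  by (auto simp: lstar_eigenpoly_def le_Suc_eq numeral_2_eq_2)

lemma lstar_eigenpoly_in_Pd: "j \<le> 2 \<Longrightarrow> lstar_eigenpoly r s j \<in> Pd 2"
  using degree_lstar_eigenpoly[of j r s] by (simp add: Pd_def)

text \<open>Read off from L u = x u for degree u < 2 and
  L u = x u - (x - theta_0) (x - theta_1) (x - theta_2) for u = lstar_eigenpoly r s 2.\<close>

definition lmap_eigenbasis_matrix :: "real \<Rightarrow> real \<Rightarrow> nat \<Rightarrow> nat \<Rightarrow> real" where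
  "lmap_eigenbasis_matrix r s i j =
     (if i = 0 \<and> j = 0 then 2 * (r + 1) else if i = 0 \<and> j = 1 then 2 * (r + 1) * (s + 2)
      else if i = 1 \<and> j = 0 then 1 else if i = 1 \<and> j = 1 then r + s + 4
      else if i = 1 \<and> j = 2 then 2 * (r + 2) * (s + 1) else if i = 2 \<and> j = 1 then 1
      else if i = 2 \<and> j = 2 then 2 * (s + 1) else 0)"

context
  fixes r s :: real
  assumes r: "r > -1" and s: "s > -1"
begin

lemma denominators_nonzero: "r + s + 2 \<noteq> 0" "r + s + 3 \<noteq> 0" "r + s + 4 \<noteq> 0"
  using r s by linarith+

lemma bs_cs_2_nonzero: "bs r s 2 0 \<noteq> 0" "bs r s 2 1 \<noteq> 0" "cs r s 2 1 \<noteq> 0" "cs r s 2 2 \<noteq> 0"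
  using r s by (simp_all add: bs_cs_2 del: One_nat_def)

lemma as_2_sums:
  "as r s 2 0 + as r s 2 1 = (r + 3 * s + 4) / (r + s + 2)"
  "as r s 2 1 + as r s 2 2 = (3 * r + s + 8) / (r + s + 4)"
  using denominators_nonzero unfolding as_eq bs_cs_2 bs_last cs_first
  by (simp_all add: divide_simps) (simp_all add: algebra_simps)

lemma diag_tridiag_basis_Lmap_2_iff:
  "diag_tridiag_basis (Pd 2) (Lmap r s 2)
     (\<lambda>f. Lstar r s 2 (Lstar r s 2 f + smult lam f) + smult lam (Lstar r s 2 f + smult lam f))
   \<longleftrightarrow> (as r s 2 0 + as r s 2 1 + 2 * lam = 0 \<longleftrightarrow> as r s 2 1 + as r s 2 2 + 2 * lam \<noteq> 0)"
proof -
  let ?B = "\<lambda>f. Lstar r s 2 (Lstar r s 2 f + smult lam f) + smult lam (Lstar r s 2 f + smult lam f)"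
  let ?S = "matrix_mult 2 (lstar_shift_matrix r s 2 lam) (lstar_shift_matrix r s 2 lam)"
  have "diag_tridiag_basis (Pd 2) (Lmap r s 2) ?B
    \<longleftrightarrow> (\<exists>k. bij_betw k {..2} {..2} \<and> irred_tridiagonal 3 (\<lambda>i j. ?S (k i) (k j)))"
    using diag_tridiag_basis_node_multiplication_iff[OF inj_on_theta acts_on_values_Lmap
        acts_on_values_Lstar_shift_square, OF r s r s r s]
    by (simp add: numeral_3_eq_3)
  also have "\<dots> \<longleftrightarrow> (?S 0 1 = 0 \<longleftrightarrow> ?S 1 2 \<noteq> 0)"
    using bs_cs_2_nonzero
    by (intro irred_tridiagonal_3_permuted_iff)
      (simp_all add: lstar_shift_square_entries del: One_nat_def)
  also have "\<dots> \<longleftrightarrow>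
      (as r s 2 0 + as r s 2 1 + 2 * lam = 0 \<longleftrightarrow> as r s 2 1 + as r s 2 2 + 2 * lam \<noteq> 0)"
    using bs_cs_2_nonzero by (simp add: lstar_shift_square_entries del: One_nat_def)
  finally show ?thesis .
qed

lemma Lstar_lstar_eigenpoly:
  assumes "j \<le> 2"
  shows "Lstar r s 2 (lstar_eigenpoly r s j) = smult (real j) (lstar_eigenpoly r s j)"
proof (rule acts_on_values_eigenvector[OF inj_on_theta acts_on_values_Lstar, OF r s r s])
  show "lstar_eigenpoly r s j \<in> Pd 2" using assms by (rule lstar_eigenpoly_in_Pd)
  fix i :: nat assume "i \<le> 2"
  then have "i = 0 \<or> i = 1 \<or> i = 2" "j = 0 \<or> j = 1 \<or> j = 2" using assms by linarith+
  then show "(\<Sum>k\<le>2. lstar_matrix r s 2 i k * poly (lstar_eigenpoly r s j) (theta r s 2 k))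
      = real j * poly (lstar_eigenpoly r s j) (theta r s 2 i)"
    unfolding sum_lstar_matrix[OF \<open>i \<le> 2\<close>] using denominators_nonzero
    by (elim disjE; simp add: as_eq bs_last cs_first bs_cs_2 theta_def lstar_eigenpoly_def
        divide_simps del: One_nat_def; simp add: algebra_simps)
qed

lemma Lstar_shift_square_lstar_eigenpoly:
  assumes "j \<le> 2"
  shows "Lstar r s 2 (Lstar r s 2 (lstar_eigenpoly r s j) + smult lam (lstar_eigenpoly r s j))
      + smult lam (Lstar r s 2 (lstar_eigenpoly r s j) + smult lam (lstar_eigenpoly r s j))
    = smult ((real j + lam)\<^sup>2) (lstar_eigenpoly r s j)"
proof -
  have "linear_map_on (Pd 2) (Lstar r s 2)"
    by (rule linear_map_on_if_acts_on_values[OF inj_on_theta acts_on_values_Lstar, OF r s r s])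
  then have "Lstar r s 2 (smult c (lstar_eigenpoly r s j))
      = smult c (Lstar r s 2 (lstar_eigenpoly r s j))" for c
    using lstar_eigenpoly_in_Pd[OF assms] unfolding linear_map_on_def by blast
  then show ?thesis
    by (simp add: Lstar_lstar_eigenpoly[OF assms] smult_add_left[symmetric] power2_eq_square
        algebra_simps)
qed

lemma diag_tridiag_basis_Lstar_shift_square_Lmap:
  "diag_tridiag_basis (Pd 2)
     (\<lambda>f. Lstar r s 2 (Lstar r s 2 f + smult lam f) + smult lam (Lstar r s 2 f + smult lam f))
     (Lmap r s 2)"
proof -
  let ?B = "\<lambda>f. Lstar r s 2 (Lstar r s 2 f + smult lam f) + smult lam (Lstar r s 2 f + smult lam f)"
  let ?u = "lstar_eigenpoly r s"
  have sum_3: "(\<Sum>i<3. f i) = f 0 + f 1 + f 2" for f :: "nat \<Rightarrow> 'a::comm_monoid_add"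
    by (simp add: numeral_3_eq_3 numeral_2_eq_2 add.assoc)
  have uPd: "?u i \<in> Pd 2" if "i < 3" for i using that by (simp add: lstar_eigenpoly_in_Pd)
  have "is_basis (Pd 2) (Suc 2) ?u" by (rule is_basis_if_degree_eq) (rule degree_lstar_eigenpoly)
  then have "is_basis (Pd 2) 3 ?u" by (simp add: numeral_3_eq_3)
  moreover have "matrix_wrt 3 ?u ?B (\<lambda>i j. if i = j then (real j + lam)\<^sup>2 else 0)"
    unfolding matrix_wrt_def
  proof (intro allI impI)
    fix j :: nat assume "j < 3"
    have "(\<Sum>i<3. smult (if i = j then (real j + lam)\<^sup>2 else 0) (?u i))
        = (\<Sum>i<3. if i = j then smult ((real j + lam)\<^sup>2) (?u j) else 0)"
      by (intro sum.cong) auto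
    then show "?B (?u j) = (\<Sum>i<3. smult (if i = j then (real j + lam)\<^sup>2 else 0) (?u i))"
      using \<open>j < 3\<close> by (simp add: Lstar_shift_square_lstar_eigenpoly)
  qed
  moreover have "is_diagonal 3 (\<lambda>i j. if i = j then (real j + lam)\<^sup>2 else 0)"
    unfolding is_diagonal_def by simp
  moreover have "matrix_wrt 3 ?u (Lmap r s 2) (lmap_eigenbasis_matrix r s)"
  proof (rule matrix_wrt_if_values[OF inj_on_theta[OF r s] uPd])
    show "Lmap r s 2 (?u j) \<in> Pd 2" if "j < 3" for j
      using acts_on_valuesD(1)[OF acts_on_values_Lmap[OF r s] uPd[OF that]] .
    fix j m :: nat assume "j < 3" "m \<le> 2"
    have "poly (Lmap r s 2 (?u j)) (theta r s 2 m) = theta r s 2 m * poly (?u j) (theta r s 2 m)"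
      using acts_on_valuesD(2)[OF acts_on_values_Lmap[OF r s] uPd[OF \<open>j < 3\<close>] \<open>m \<le> 2\<close>]
        \<open>m \<le> 2\<close> by (simp add: sum_diagonal_mult)
    moreover have "j = 0 \<or> j = 1 \<or> j = 2" "m = 0 \<or> m = 1 \<or> m = 2"
      using \<open>j < 3\<close> \<open>m \<le> 2\<close> by linarith+
    ultimately show "poly (Lmap r s 2 (?u j)) (theta r s 2 m)
        = (\<Sum>i<3. lmap_eigenbasis_matrix r s i j * poly (?u i) (theta r s 2 m))"
      by (elim disjE; simp add: sum_3 theta_def lstar_eigenpoly_def lmap_eigenbasis_matrix_def
          del: One_nat_def; simp add: algebra_simps)
  qed
  moreover have "irred_tridiagonal 3 (lmap_eigenbasis_matrix r s)"
    using r s by (simp add: irred_tridiagonal_3_iff lmap_eigenbasis_matrix_def)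
  ultimately show ?thesis unfolding diag_tridiag_basis_def by blast
qed

lemma leonard_condition_iff:
  "(as r s 2 0 + as r s 2 1 + 2 * lam = 0 \<longleftrightarrow> as r s 2 1 + as r s 2 2 + 2 * lam \<noteq> 0)
   \<longleftrightarrow> r \<noteq> s \<and> 2 * (lam + 1) \<in> {(r - s) / (r + s + 2), (s - r) / (r + s + 4)}"
proof -
  note nz = denominators_nonzero
  have P: "as r s 2 0 + as r s 2 1 + 2 * lam = 0 \<longleftrightarrow> 2 * (lam + 1) = (r - s) / (r + s + 2)"
    unfolding as_2_sums using nz by (simp add: divide_simps) (auto simp: algebra_simps)
  have Q: "as r s 2 1 + as r s 2 2 + 2 * lam = 0 \<longleftrightarrow> 2 * (lam + 1) = (s - r) / (r + s + 4)"
    unfolding as_2_sums using nz by (simp add: divide_simps) (auto simp: algebra_simps)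
  have "(r - s) / (r + s + 2) = (s - r) / (r + s + 4)
      \<longleftrightarrow> (r - s) * (r + s + 4) = (s - r) * (r + s + 2)"
    using nz by (simp add: divide_simps)
  also have "\<dots> \<longleftrightarrow> (r - s) * (2 * (r + s + 3)) = 0"
    unfolding eq_iff_diff_eq_0[of "(r - s) * (r + s + 4)"] by (simp add: algebra_simps)
  also have "\<dots> \<longleftrightarrow> r = s" using nz by simp
  finally have "(r - s) / (r + s + 2) = (s - r) / (r + s + 4) \<longleftrightarrow> r = s" .
  then show ?thesis unfolding P Q by auto
qed

end

theorem corollary2p11:
  fixes r s lam :: real
  assumes "r > -1" and "s > -1"
  shows "leonard_pair (Pd 2) (Lmap r s 2)
           (\<lambda>f. Lstar r s 2 (Lstar r s 2 f + smult lam f) + smult lam (Lstar r s 2 f + smult lam f))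
         \<longleftrightarrow> r \<noteq> s \<and> 2 * (lam + 1) \<in> {(r - s) / (r + s + 2), (s - r) / (r + s + 4)}"
proof -
  let ?B = "\<lambda>f. Lstar r s 2 (Lstar r s 2 f + smult lam f) + smult lam (Lstar r s 2 f + smult lam f)"
  have t: "inj_on (theta r s 2) {..2}" by (rule inj_on_theta[OF assms])
  have "1 \<in> Pd 2" by (simp add: Pd_def)
  then have "Pd 2 \<noteq> {0}" by auto
  moreover have "linear_map_on (Pd 2) (Lmap r s 2)"
    by (rule linear_map_on_if_acts_on_values[OF t acts_on_values_Lmap[OF assms]])
  moreover have "linear_map_on (Pd 2) ?B"
    by (rule linear_map_on_if_acts_on_values[OF t acts_on_values_Lstar_shift_square[OF assms]])
  ultimately have "leonard_pair (Pd 2) (Lmap r s 2) ?B \<longleftrightarrow> diag_tridiag_basis (Pd 2) (Lmap r s 2) ?B"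
    unfolding leonard_pair_def using diag_tridiag_basis_Lstar_shift_square_Lmap[OF assms] by simp
  also have "\<dots> \<longleftrightarrow>
      (as r s 2 0 + as r s 2 1 + 2 * lam = 0 \<longleftrightarrow> as r s 2 1 + as r s 2 2 + 2 * lam \<noteq> 0)"
    by (rule diag_tridiag_basis_Lmap_2_iff[OF assms])
  also have "\<dots> \<longleftrightarrow> r \<noteq> s \<and> 2 * (lam + 1) \<in> {(r - s) / (r + s + 2), (s - r) / (r + s + 4)}"
    by (rule leonard_condition_iff[OF assms])
  finally show ?thesis .
qed

end
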